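(* Let $\Gamma=(V,E)$ be a finite vertex-transitive graph admitting an extended irregular dominating set $S$. Then for every vertex $u\in V$ there exists a unique vertex $v\in S$ covering $u$.
   Context: Let $\Gamma=(V,E)$ be a finite simple undirected graph with graph distance $d$. A vertex $v$ carrying a non-negative integer label $\ell$ dominates (covers) exactly the vertices $u$ with $d(u,v)=\ell$; a vertex labeled $0$ dominates only itself. An extended irregular dominating set is a set $S\subseteq V$ together with a labeling $\lambda:S\to\mathbb{Z}_{\ge 0}$ with distinct labels on distinct vertices, such that every vertex of $V$ is dominated by at least one vertex of $S$; it is assumed that some vertex of $S$ has label $0$. *)

theory Defs
  imports Main "HOL-Library.Extended_Nat"
begin

definition simple_graph :: "'a set \<Rightarrow> ('a \<Rightarrow> 'a \<Rightarrow> bool) \<Rightarrow> bool" where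
  "simple_graph V E \<longleftrightarrow> finite V
     \<and> (\<forall>u v. E u v \<longrightarrow> u \<in> V \<and> v \<in> V)
     \<and> (\<forall>u v. E u v \<longrightarrow> E v u)
     \<and> (\<forall>u. \<not> E u u)"

definition gdist :: "('a \<Rightarrow> 'a \<Rightarrow> bool) \<Rightarrow> 'a \<Rightarrow> 'a \<Rightarrow> enat" where
  "gdist E u v =
     (if \<exists>n. (u, v) \<in> {(x, y). E x y} ^^ n
      then enat (LEAST n. (u, v) \<in> {(x, y). E x y} ^^ n)
      else \<infinity>)"

definition graph_automorphism :: "'a set \<Rightarrow> ('a \<Rightarrow> 'a \<Rightarrow> bool) \<Rightarrow> ('a \<Rightarrow> 'a) \<Rightarrow> bool" where
  "graph_automorphism V E f \<longleftrightarrow> bij_betw f V V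
     \<and> (\<forall>u\<in>V. \<forall>v\<in>V. E u v \<longleftrightarrow> E (f u) (f v))"

definition vertex_transitive :: "'a set \<Rightarrow> ('a \<Rightarrow> 'a \<Rightarrow> bool) \<Rightarrow> bool" where
  "vertex_transitive V E \<longleftrightarrow>
     (\<forall>u\<in>V. \<forall>v\<in>V. \<exists>f. graph_automorphism V E f \<and> f u = v)"

definition dominates :: "('a \<Rightarrow> 'a \<Rightarrow> bool) \<Rightarrow> 'a \<Rightarrow> nat \<Rightarrow> 'a \<Rightarrow> bool" where
  "dominates E v l u \<longleftrightarrow> gdist E u v = enat l"

definition ext_irregular_dominating_set ::
  "'a set \<Rightarrow> ('a \<Rightarrow> 'a \<Rightarrow> bool) \<Rightarrow> 'a set \<Rightarrow> ('a \<Rightarrow> nat) \<Rightarrow> bool" where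
  "ext_irregular_dominating_set V E S lab \<longleftrightarrow>
     S \<subseteq> V
     \<and> inj_on lab S
     \<and> (\<forall>u\<in>V. \<exists>v\<in>S. dominates E v (lab v) u)
     \<and> (\<exists>v\<in>S. lab v = 0)"

end

theory Submission
  imports Defs
begin

text \<open>By vertex transitivity, the sphere of radius \<open>l\<close> around any vertex has the same size as
  the sphere of radius \<open>l\<close> around a fixed vertex \<open>w\<close>. Since the labels are distinct, the
  spheres of radius \<open>lab v\<close> around the vertices \<open>v \<in> S\<close> therefore have total size equal to that
  of pairwise disjoint spheres around \<open>w\<close>, i.e. at most \<open>|V|\<close>. A cover of \<open>V\<close> whose sizes
  sum to at most \<open>|V|\<close> covers every vertex exactly once.\<close>

lemma relpow_automorphism_iff:
  assumes "simple_graph V E" and "graph_automorphism V E f" and "u \<in> V" and "v \<in> V"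
  shows "(f u, f v) \<in> {(x, y). E x y} ^^ n \<longleftrightarrow> (u, v) \<in> {(x, y). E x y} ^^ n"
  using \<open>v \<in> V\<close>
proof (induction n arbitrary: v)
  case 0
  have "inj_on f V"
    using assms(2) unfolding graph_automorphism_def bij_betw_def by blast
  then show ?case
    using \<open>u \<in> V\<close> 0 by (auto dest: inj_onD)
next
  case (Suc n)
  have in_V: "E x y \<Longrightarrow> x \<in> V" for x y
    using assms(1) unfolding simple_graph_def by blast
  have onto: "f ` V = V" and adj: "\<forall>x\<in>V. \<forall>y\<in>V. E x y \<longleftrightarrow> E (f x) (f y)"
    using assms(2) unfolding graph_automorphism_def bij_betw_def by blast+
  have "(f u, f v) \<in> {(x, y). E x y} ^^ Suc n
      \<longleftrightarrow> (\<exists>y\<in>f ` V. (f u, y) \<in> {(x, y). E x y} ^^ n \<and> E y (f v))"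
    using in_V onto by auto
  also have "\<dots> \<longleftrightarrow> (\<exists>y\<in>V. (f u, f y) \<in> {(x, y). E x y} ^^ n \<and> E (f y) (f v))"
    by blast
  also have "\<dots> \<longleftrightarrow> (\<exists>y\<in>V. (u, y) \<in> {(x, y). E x y} ^^ n \<and> E y v)"
    using Suc adj by auto
  also have "\<dots> \<longleftrightarrow> (u, v) \<in> {(x, y). E x y} ^^ Suc n"
    using in_V by auto
  finally show ?case .
qed

lemma gdist_automorphism:
  assumes "simple_graph V E" and "graph_automorphism V E f" and "u \<in> V" and "v \<in> V"
  shows "gdist E (f u) (f v) = gdist E u v"
  unfolding gdist_def using relpow_automorphism_iff[OF assms] by simp

definition sphere :: "'a set \<Rightarrow> ('a \<Rightarrow> 'a \<Rightarrow> bool) \<Rightarrow> 'a \<Rightarrow> nat \<Rightarrow> 'a set" where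
  "sphere V E w l = {u \<in> V. gdist E u w = enat l}"

lemma image_sphere_automorphism:
  assumes "simple_graph V E" and "graph_automorphism V E f" and "w \<in> V"
  shows "f ` sphere V E w l = sphere V E (f w) l"
proof -
  have onto: "f ` V = V"
    using assms(2) unfolding graph_automorphism_def bij_betw_def by blast
  note gdist_f = gdist_automorphism[OF assms(1,2) _ \<open>w \<in> V\<close>]
  show ?thesis
  proof
    show "f ` sphere V E w l \<subseteq> sphere V E (f w) l"
      using onto gdist_f unfolding sphere_def by auto
    show "sphere V E (f w) l \<subseteq> f ` sphere V E w l"
    proof
      fix x assume "x \<in> sphere V E (f w) l"
      moreover obtain y where "y \<in> V" "x = f y"
        using onto calculation unfolding sphere_def by blast
      ultimately show "x \<in> f ` sphere V E w l"
        using gdist_f unfolding sphere_def by auto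
    qed
  qed
qed

lemma card_sphere_vertex_transitive:
  assumes "simple_graph V E" and "vertex_transitive V E" and "v \<in> V" and "w \<in> V"
  shows "card (sphere V E v l) = card (sphere V E w l)"
proof -
  obtain f where f: "graph_automorphism V E f" "f v = w"
    using assms unfolding vertex_transitive_def by blast
  have "inj_on f (sphere V E v l)"
    using f(1) unfolding graph_automorphism_def bij_betw_def sphere_def
    by (auto intro: inj_on_subset)
  then have "card (sphere V E v l) = card (f ` sphere V E v l)"
    by (simp add: card_image)
  also have "\<dots> = card (sphere V E w l)"
    using image_sphere_automorphism[OF assms(1) f(1) \<open>v \<in> V\<close>] f(2) by simp
  finally show ?thesis .
qed

lemma sum_card_spheres_le:
  assumes "finite V" and "finite L"
  shows "(\<Sum>l\<in>L. card (sphere V E w l)) \<le> card V"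
proof -
  have "finite (sphere V E w l)" for l
    using \<open>finite V\<close> unfolding sphere_def by simp
  then have "(\<Sum>l\<in>L. card (sphere V E w l)) = card (\<Union>l\<in>L. sphere V E w l)"
    using \<open>finite L\<close> by (intro card_UN_disjoint[symmetric]) (auto simp: sphere_def)
  also have "\<dots> \<le> card V"
    using \<open>finite V\<close> by (intro card_mono) (auto simp: sphere_def)
  finally show ?thesis .
qed

lemma sum_card_spheres_inj_radii_le:
  assumes "simple_graph V E" and "vertex_transitive V E"
    and "S \<subseteq> V" and "inj_on r S" and "w \<in> V"
  shows "(\<Sum>v\<in>S. card (sphere V E v (r v))) \<le> card V"
proof -
  have "finite V"
    using assms(1) unfolding simple_graph_def by blast
  have "(\<Sum>v\<in>S. card (sphere V E v (r v))) = (\<Sum>v\<in>S. card (sphere V E w (r v)))"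
    using card_sphere_vertex_transitive[OF assms(1,2) _ \<open>w \<in> V\<close>] \<open>S \<subseteq> V\<close>
    by (intro sum.cong) auto
  also have "\<dots> = (\<Sum>l\<in>r ` S. card (sphere V E w l))"
    using sum.reindex[OF \<open>inj_on r S\<close>, of "\<lambda>l. card (sphere V E w l)"] by simp
  also have "\<dots> \<le> card V"
    using \<open>finite V\<close> \<open>S \<subseteq> V\<close> finite_subset by (intro sum_card_spheres_le) auto
  finally show ?thesis .
qed

lemma cover_unique_if_sum_card_le:
  assumes "finite V" and "finite S"
    and "\<forall>i\<in>S. A i \<subseteq> V" and "\<forall>u\<in>V. \<exists>i\<in>S. u \<in> A i"
    and "(\<Sum>i\<in>S. card (A i)) \<le> card V"
  shows "\<forall>u\<in>V. \<exists>!i. i \<in> S \<and> u \<in> A i"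
proof -
  define m where "m u = card {i \<in> S. u \<in> A i}" for u
  have m_pos: "m u \<ge> 1" if "u \<in> V" for u
    using assms(2,4) that unfolding m_def by (auto simp: Suc_le_eq card_gt_0_iff)
  have "(\<Sum>u\<in>V. m u) = (\<Sum>i\<in>S. card {u \<in> V. u \<in> A i})"
    using assms(1,2) unfolding m_def by (intro sum_multicount_gen[symmetric]) auto
  also have "\<dots> = (\<Sum>i\<in>S. card (A i))"
    using assms(3) by (intro sum.cong refl arg_cong[where f = card]) auto
  also have "\<dots> \<le> (\<Sum>u\<in>V. 1)"
    using assms(5) by simp
  finally have "(\<Sum>u\<in>V. m u - 1) = 0"
    using m_pos by (simp add: sum_subtractf_nat)
  then have "m u = 1" if "u \<in> V" for u
    using assms(1) m_pos[OF that] that by (simp add: sum_eq_0_iff) (meson le_antisym)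
  then have "\<exists>i. {j \<in> S. u \<in> A j} = {i}" if "u \<in> V" for u
    using that unfolding m_def by (simp add: card_1_singleton_iff)
  then show ?thesis
    by (metis (mono_tags, lifting) mem_Collect_eq singletonD singletonI)
qed

theorem theorem2p5:
  fixes V :: "'a set" and E :: "'a \<Rightarrow> 'a \<Rightarrow> bool"
    and S :: "'a set" and lab :: "'a \<Rightarrow> nat"
  assumes "simple_graph V E"
    and "vertex_transitive V E"
    and "ext_irregular_dominating_set V E S lab"
  shows "\<forall>u\<in>V. \<exists>!v. v \<in> S \<and> dominates E v (lab v) u"
proof -
  have "S \<subseteq> V" and "inj_on lab S" and covers: "\<forall>u\<in>V. \<exists>v\<in>S. dominates E v (lab v) u"
    and "\<exists>w\<in>S. lab w = 0"
    using assms(3) unfolding ext_irregular_dominating_set_def by auto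
  then obtain w where "w \<in> V"
    \<comment> \<open>the zero label only serves to provide a base vertex\<close>
    by blast
  have "finite V"
    using assms(1) unfolding simple_graph_def by blast
  have dominates_iff: "u \<in> V \<Longrightarrow> dominates E v (lab v) u \<longleftrightarrow> u \<in> sphere V E v (lab v)" for u v
    unfolding dominates_def sphere_def by simp
  have "\<forall>u\<in>V. \<exists>!v. v \<in> S \<and> u \<in> sphere V E v (lab v)"
  proof (rule cover_unique_if_sum_card_le)
    show "finite S"
      using \<open>finite V\<close> \<open>S \<subseteq> V\<close> finite_subset by blast
    show "(\<Sum>v\<in>S. card (sphere V E v (lab v))) \<le> card V"
      using sum_card_spheres_inj_radii_le[OF assms(1,2) \<open>S \<subseteq> V\<close> \<open>inj_on lab S\<close> \<open>w \<in> V\<close>] .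
  qed (use \<open>finite V\<close> covers dominates_iff in \<open>auto simp: sphere_def\<close>)
  then show ?thesis
    using dominates_iff by simp
qed

end
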